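(* Let $L\ge 1$ be an integer. Then, as polynomials in $u,v$, \[ \text{(i)}\quad (1+u)^L(1+uv)^L(1-u^2v)(1-v)=\sum_{N,M\ge 0} Z(L;N,M)\,u^Nv^M, \] \[ \text{(ii)}\quad (1+u)^L(1+uv)^L(1-v)=\sum_{N,M\ge 0}\widetilde{Z}(L;N,M)\,u^Nv^M . \]
   Context: For integers $x$ and $k\ge0$ let $\binom{x}{k}=\frac{x(x-1)\cdots(x-k+1)}{k!}$ (generalized binomial coefficient; $\binom{L}{k}=0$ for $k>L\ge0$). For integers $N,M\ge 0$ define \[ Z(L;N,M)=\sum \binom{L}{N_r}\prod_{n\ge1}\binom{P'_n+M'_n}{M'_n}\binom{P_n+M_n}{M_n},\qquad \widetilde{Z}(L;N,M)=\sum \binom{L}{N_r}\prod_{n\ge1}\binom{P'_n+M'_n+n}{M'_n}\binom{P_n+M_n}{M_n}, \] where each sum runs over all nonnegative integers $N_r$ and finitely supported families of nonnegative integers $(M_n)_{n\ge1}$, $(M'_n)_{n\ge1}$ with $N=N_r+2\sum_{n\ge1}nM'_n$ and $M=\sum_{n\ge1}n(M_n+M'_n)$, and where $P'_n=L-N+2\sum_{m>n}(m-n)M'_m$ and $P_n=N-2M+2\sum_{m>n}(m-n)M_m$. *)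

theory Defs
  imports Main "HOL-Computational_Algebra.Polynomial"
begin

text \<open>Generalized binomial coefficient for an integer top: x(x-1)...(x-k+1)/k!
  (the division is exact).\<close>
definition gbinom :: "int \<Rightarrow> nat \<Rightarrow> int" where
  "gbinom x k = (\<Prod>i<k. x - int i) div fact k"

definition fsum :: "(nat \<Rightarrow> int) \<Rightarrow> int" where
  "fsum f = sum f {n. f n \<noteq> 0}"

definition fprod_pos :: "(nat \<Rightarrow> int) \<Rightarrow> int" where
  "fprod_pos g = prod g {n. 1 \<le> n \<and> g n \<noteq> 1}"

text \<open>Admissible configurations (N_r, (M_n), (M'_n)); the families are indexed by n \<ge> 1,
  so we require value 0 at index 0, and finite support.\<close>
definition Zconf :: "nat \<Rightarrow> nat \<Rightarrow> (nat \<times> (nat \<Rightarrow> nat) \<times> (nat \<Rightarrow> nat)) set" where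
  "Zconf N M = {(Nr, m, m'). m 0 = 0 \<and> m' 0 = 0 \<and>
      finite {n. m n \<noteq> 0} \<and> finite {n. m' n \<noteq> 0} \<and>
      int N = int Nr + 2 * fsum (\<lambda>n. int n * int (m' n)) \<and>
      int M = fsum (\<lambda>n. int n * (int (m n) + int (m' n)))}"

definition Pp :: "nat \<Rightarrow> nat \<Rightarrow> (nat \<Rightarrow> nat) \<Rightarrow> nat \<Rightarrow> int" where
  "Pp L N m' n = int L - int N +
     2 * fsum (\<lambda>k. if n < k then (int k - int n) * int (m' k) else 0)"

definition P :: "nat \<Rightarrow> nat \<Rightarrow> (nat \<Rightarrow> nat) \<Rightarrow> nat \<Rightarrow> int" where
  "P N M m n = int N - 2 * int M +
     2 * fsum (\<lambda>k. if n < k then (int k - int n) * int (m k) else 0)"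

definition Z :: "nat \<Rightarrow> nat \<Rightarrow> nat \<Rightarrow> int" where
  "Z L N M = (\<Sum>(Nr, m, m') \<in> Zconf N M.
     gbinom (int L) Nr *
     fprod_pos (\<lambda>n. gbinom (Pp L N m' n + int (m' n)) (m' n) *
                    gbinom (P N M m n + int (m n)) (m n)))"

definition Ztilde :: "nat \<Rightarrow> nat \<Rightarrow> nat \<Rightarrow> int" where
  "Ztilde L N M = (\<Sum>(Nr, m, m') \<in> Zconf N M.
     gbinom (int L) Nr *
     fprod_pos (\<lambda>n. gbinom (Pp L N m' n + int (m' n) + int n) (m' n) *
                    gbinom (P N M m n + int (m n)) (m n)))"

text \<open>Bivariate integer polynomials as \<open>int poly poly\<close>: outer variable u, inner variable v.
  The coefficient of u^N v^M of p is \<open>coeff (coeff p N) M\<close>.\<close>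
definition var_u :: "int poly poly" where "var_u = [:0, 1:]"
definition var_v :: "int poly poly" where "var_v = [:[:0, 1:]:]"

end

theory Submission
  imports Defs "HOL-Computational_Algebra.Formal_Power_Series"
begin

text \<open>Since \<open>(1 + u)(1 + uv) = u(1 + v) + (1 + u^2 v)\<close>, the binomial theorem writes the coefficient
  of \<open>u^N v^M\<close> on the left as a sum over \<open>j\<close> of \<open>binom(L, N - 2j)\<close> times the coefficient of \<open>x^(M - j)\<close>
  in \<open>(1 + x)^(N - 2j) (1 - x)\<close> and the coefficient of \<open>x^j\<close> in \<open>(1 + x)^(L - N + 2j) (1 - x)\<close>
  (resp. in \<open>(1 + x)^(L - N + 2j)\<close>); the coefficient of \<open>x^k\<close> in \<open>(1 + x)^n (1 - x)\<close> is
  \<open>binom(n, k) - binom(n, k - 1)\<close>.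

  On the right, grouping the configurations by \<open>j = \<Sum> n M'\<^sub>n\<close> turns \<open>Z\<close> into a sum over the same \<open>j\<close>
  of \<open>binom(L, N - 2j)\<close> times two independent sums over partitions (of \<open>j\<close> and of \<open>M - j\<close>) of
  products of binomials of vacancy numbers.  Such a partition sum equals
  \<open>binom(X + 2K, K) - binom(X + 2K, K - 1)\<close>, and \<open>binom(X + 2K, K)\<close> with the extra \<open>+ n\<close> of \<open>Ztilde\<close>.
  To prove this, refine by the number \<open>J\<close> of parts: deleting the first column of the Young diagram
  lowers the index of every vacancy number by one, which gives a recursion in \<open>(K, J)\<close> whose
  closed-form solution is checked by Vandermonde-type identities.\<close>

section \<open>Binomial coefficients\<close>

lemma gbinom_0 [simp]: "gbinom x 0 = 1"
  by (simp add: gbinom_def)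

lemma of_int_gbinom: "of_int (gbinom x k) = (of_int x :: 'a::field_char_0) gchoose k"
proof -
  obtain G where G: "fact k * G = (\<Prod>i = 0..<k. x - int i)" "of_int G = (of_int x :: 'a) gchoose k"
    using gbinomial_int_mult_fact[of k x] of_int_gbinomial[of x k] by blast
  have "gbinom x k = G"
    unfolding gbinom_def lessThan_atLeast0 G(1)[symmetric] by simp
  with G(2) show ?thesis
    by simp
qed

lemma gbinom_of_nat: "gbinom (int n) k = int (n choose k)"
  by (rule of_int_eq_iff[where 'a=real, THEN iffD1]) (simp add: of_int_gbinom binomial_gbinomial)

lemma gbinom_Suc_Suc: "gbinom (x + 1) (Suc k) = gbinom x k + gbinom x (Suc k)"
  by (rule of_int_eq_iff[where 'a=real, THEN iffD1]) (simp add: of_int_gbinom gbinomial_Suc_Suc)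

definition gbinom_diff :: "int \<Rightarrow> nat \<Rightarrow> int" where
  "gbinom_diff x k = gbinom x k - (if k = 0 then 0 else gbinom x (k - 1))"

lemma binomial_symmetric_add: "i + j = n \<Longrightarrow> n choose i = n choose j"
  using binomial_symmetric[of i n] by (metis add_diff_cancel_left' le_add1)

lemma choose_mult_shifted:
  assumes "p \<le> n"
  shows "(a + p choose (p + e)) * (a + n choose (n - p)) = (a + n choose (n + e)) * (n + e choose (p + e))"
proof (cases "e \<le> a")
  case True
  have "(a + n choose (a + p)) * (a + p choose (a - e)) = (a + n choose (a - e)) * (n + e choose (p + e))"
    using choose_mult[of "a - e" "a + p" "a + n"] True assms by simp
  moreover have "a + p choose (p + e) = a + p choose (a - e)" "a + n choose (n - p) = a + n choose (a + p)"
    "a + n choose (n + e) = a + n choose (a - e)"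
    using True assms by (simp_all add: binomial_symmetric_add)
  ultimately show ?thesis
    by (simp add: mult.commute)
next
  case False
  then show ?thesis
    by (simp add: binomial_eq_0)
qed

lemma sum_atMost_triangle:
  fixes n :: nat
  shows "(\<Sum>i\<le>n. \<Sum>j\<le>n - i. g i j) = (\<Sum>k\<le>n. \<Sum>i\<le>k. g i (k - i))"
proof -
  have "{(i, j). i + j \<le> n} = Sigma {..n} (\<lambda>i. {..n - i})"
    by auto
  then show ?thesis
    using sum.triangle_reindex_eq[of g n] by (simp add: sum.Sigma)
qed

lemma gbinomial_Vandermonde_shifted:
  fixes x :: "'a::field_char_0"
  assumes "d = 0 \<or> e = 0"
  shows "(\<Sum>i\<le>n. (x gchoose (i + d)) * of_nat (n + e choose (i + e))) = (x + of_nat (n + e)) gchoose (n + d)"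
proof -
  have "(x + of_nat (n + e)) gchoose (n + d) = (\<Sum>k=0..n + d. (x gchoose k) * of_nat (n + e choose (n + d - k)))"
    using gbinomial_Vandermonde[of x "of_nat (n + e)" "n + d"] by (simp add: binomial_gbinomial)
  also have "\<dots> = (\<Sum>k=0 + d..n + d. (x gchoose k) * of_nat (n + e choose (n + d - k)))"
    \<comment> \<open>for \<open>k < d\<close> we have \<open>e = 0\<close>, so the second factor vanishes\<close>
    by (rule sum.mono_neutral_right) (use assms in \<open>auto simp: binomial_eq_0\<close>)
  also have "\<dots> = (\<Sum>i\<le>n. (x gchoose (i + d)) * of_nat (n + e choose (i + e)))"
    unfolding sum.shift_bounds_cl_nat_ivl atMost_atLeast0
    by (intro sum.cong refl) (simp add: binomial_symmetric_add)
  finally show ?thesis ..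
qed

lemma gbinomial_mult_Vandermonde:
  fixes A :: "'a::field_char_0"
  assumes "i \<le> n"
  shows "(A gchoose i) * ((A + of_nat C - of_nat i) gchoose (n - i))
    = (\<Sum>l\<le>n - i. (A gchoose (i + l)) * of_nat (i + l choose i) * of_nat (C choose (n - (i + l))))"
proof -
  have "(A + of_nat C - of_nat i) gchoose (n - i) = (\<Sum>l\<le>n - i. ((A - of_nat i) gchoose l) * of_nat (C choose (n - (i + l))))"
    using gbinomial_Vandermonde[of "A - of_nat i" "of_nat C" "n - i"] assms
    by (simp add: atMost_atLeast0 binomial_gbinomial algebra_simps)
  moreover have "(A gchoose i) * ((A - of_nat i) gchoose l) = (A gchoose (i + l)) * of_nat (i + l choose i)" for l
    using gbinomial_trinomial_revision[of i "i + l" A] by (simp add: binomial_gbinomial)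
  ultimately show ?thesis
    by (simp add: sum_distrib_left mult.assoc flip: mult.assoc[of "A gchoose i"])
qed

lemma gbinomial_triple_sum:
  fixes A :: "'a::field_char_0"
  assumes "d = 0 \<or> e = 0"
  shows "(\<Sum>i\<le>n. (A gchoose (i + d)) * of_nat (B choose (i + e)) * ((A + of_nat (B + n) - of_nat i) gchoose (n - i)))
    = of_nat (B + n + d choose (n + e)) * ((A + of_nat (n + e)) gchoose (n + d))"
proof -
  define g where "g i p = (A gchoose (p + d)) * of_nat (p + d choose (i + d)) * of_nat (B choose (i + e))
    * of_nat (B + n + d choose (n - p))" for i p
  have expand: "(A gchoose (i + d)) * of_nat (B choose (i + e)) * ((A + of_nat (B + n) - of_nat i) gchoose (n - i))
      = (\<Sum>l\<le>n - i. g i (i + l))" if "i \<le> n" for i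
  proof -
    have "(A gchoose (i + d)) * ((A + of_nat (B + n) - of_nat i) gchoose (n - i))
        = (\<Sum>l\<le>n - i. (A gchoose (i + l + d)) * of_nat (i + l + d choose (i + d)) * of_nat (B + n + d choose (n - (i + l))))"
      using gbinomial_mult_Vandermonde[of "i + d" "n + d" A "B + n + d"] that by (simp add: algebra_simps)
    then have "of_nat (B choose (i + e)) * ((A gchoose (i + d)) * ((A + of_nat (B + n) - of_nat i) gchoose (n - i)))
        = (\<Sum>l\<le>n - i. of_nat (B choose (i + e)) * ((A gchoose (i + l + d)) * of_nat (i + l + d choose (i + d))
            * of_nat (B + n + d choose (n - (i + l)))))"
      by (simp only: sum_distrib_left)
    then show ?thesis
      unfolding g_def by (simp only: mult_ac)
  qed
  have inner: "(\<Sum>i\<le>p. g i p) = (A gchoose (p + d)) * of_nat (n + e choose (p + e)) * of_nat (B + n + d choose (n + e))"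
    if "p \<le> n" for p
  proof -
    have "(\<Sum>i\<le>p. of_nat (p + d choose (i + d)) * of_nat (B choose (i + e)) :: 'a) = of_nat (B + p + d choose (p + e))"
      using gbinomial_Vandermonde_shifted[of e d "of_nat B :: 'a" p] assms
      by (auto simp: binomial_gbinomial add.assoc mult.commute simp flip: of_nat_add)
    moreover have "(\<Sum>i\<le>p. g i p) = (A gchoose (p + d))
        * (\<Sum>i\<le>p. of_nat (p + d choose (i + d)) * of_nat (B choose (i + e))) * of_nat (B + n + d choose (n - p))"
      by (simp add: g_def sum_distrib_left sum_distrib_right mult_ac)
    ultimately show ?thesis
      using choose_mult_shifted[OF that, of "B + d" e] by (simp add: ac_simps flip: of_nat_mult)
  qed
  have "(\<Sum>i\<le>n. (A gchoose (i + d)) * of_nat (B choose (i + e)) * ((A + of_nat (B + n) - of_nat i) gchoose (n - i)))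
      = (\<Sum>p\<le>n. \<Sum>i\<le>p. g i p)"
    using expand by (simp add: sum_atMost_triangle)
  also have "\<dots> = (\<Sum>p\<le>n. (A gchoose (p + d)) * of_nat (n + e choose (p + e))) * of_nat (B + n + d choose (n + e))"
    using inner by (simp add: sum_distrib_right)
  also have "\<dots> = of_nat (B + n + d choose (n + e)) * ((A + of_nat (n + e)) gchoose (n + d))"
    using gbinomial_Vandermonde_shifted[OF assms, of A n] by simp
  finally show ?thesis .
qed

lemma gbinom_Vandermonde_shifted:
  assumes "d = 0 \<or> e = 0"
  shows "(\<Sum>i\<le>n. gbinom x (i + d) * int (n + e choose (i + e))) = gbinom (x + int (n + e)) (n + d)"
  using gbinomial_Vandermonde_shifted[OF assms, where x="real_of_int x" and n=n]
  by (simp flip: of_int_eq_iff[where 'a=real] add: of_int_gbinom)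

lemma gbinom_triple_sum:
  assumes "d = 0 \<or> e = 0" "A + int B = T"
  shows "(\<Sum>i\<le>n. gbinom (T + int (n - i)) (n - i) * (int (B choose (i + e)) * gbinom A (i + d)))
    = int (B + n + d choose (n + e)) * gbinom (A + int (n + e)) (n + d)"
proof -
  have "(\<Sum>i\<le>n. gbinom (T + int (n - i)) (n - i) * (int (B choose (i + e)) * gbinom A (i + d)))
      = (\<Sum>i\<le>n. gbinom A (i + d) * int (B choose (i + e)) * gbinom (A + int (B + n) - int i) (n - i))"
    using assms(2)[symmetric] by (intro sum.cong refl) (simp add: of_nat_diff algebra_simps)
  also have "\<dots> = int (B + n + d choose (n + e)) * gbinom (A + int (n + e)) (n + d)"
    using gbinomial_triple_sum[OF assms(1), where A="real_of_int A" and B=B and n=n]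
    by (simp flip: of_int_eq_iff[where 'a=real] add: of_int_gbinom)
  finally show ?thesis .
qed

section \<open>Finitely supported sums and products\<close>

lemma fsum_eq_sum_atMost:
  assumes "\<And>n. B < n \<Longrightarrow> f n = 0"
  shows "fsum f = (\<Sum>n\<le>B. f n)"
  unfolding fsum_def using assms by (intro sum.mono_neutral_left) (auto intro: leI)

lemma fsum_nonneg: "(\<And>n. 0 \<le> f n) \<Longrightarrow> 0 \<le> fsum f"
  by (simp add: fsum_def sum_nonneg)

lemma fsum_add:
  assumes "finite {n. f n \<noteq> 0}" "finite {n. g n \<noteq> 0}"
  shows "fsum (\<lambda>n. f n + g n) = fsum f + fsum g"
proof -
  let ?S = "{n. f n \<noteq> 0} \<union> {n. g n \<noteq> 0}"
  have "fsum h = sum h ?S" if "{n. h n \<noteq> 0} \<subseteq> ?S" for h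
    unfolding fsum_def using assms that by (intro sum.mono_neutral_left) auto
  then show ?thesis
    by (simp add: sum.distrib subset_iff)
qed

lemma fprod_pos_eq_prod:
  assumes "\<And>n. B < n \<Longrightarrow> g n = 1"
  shows "fprod_pos g = (\<Prod>n = 1..B. g n)"
  unfolding fprod_pos_def using assms by (intro prod.mono_neutral_left) (auto, meson leI)

lemma fprod_pos_mult:
  assumes "\<And>n. B < n \<Longrightarrow> g n = 1" "\<And>n. B < n \<Longrightarrow> h n = 1"
  shows "fprod_pos (\<lambda>n. g n * h n) = fprod_pos g * fprod_pos h"
  using assms by (simp add: fprod_pos_eq_prod[of B] prod.distrib)

lemma sum_atMost_eq_if_vanishing:
  fixes f :: "nat \<Rightarrow> 'a::comm_monoid_add"
  assumes "\<And>n. B < n \<Longrightarrow> f n = 0" "\<And>n. B' < n \<Longrightarrow> f n = 0"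
  shows "(\<Sum>n\<le>B. f n) = (\<Sum>n\<le>B'. f n)"
proof -
  have "(\<Sum>n\<le>C. f n) = (\<Sum>n\<le>max B B'. f n)" if "C = B \<or> C = B'" for C
    using that assms by (intro sum.mono_neutral_left) (auto, (meson leI)+)
  then show ?thesis
    by simp
qed

section \<open>Partitions\<close>

text \<open>A partition is encoded by its multiplicity function: \<open>m n\<close> is the number of parts equal to \<open>n\<close>.\<close>

definition partitions :: "nat \<Rightarrow> (nat \<Rightarrow> nat) set" where
  "partitions K = {m. m 0 = 0 \<and> (\<forall>n>K. m n = 0) \<and> (\<Sum>n\<le>K. n * m n) = K}"

definition partitions_of_length :: "nat \<Rightarrow> nat \<Rightarrow> (nat \<Rightarrow> nat) set" where
  "partitions_of_length K J = {m \<in> partitions K. (\<Sum>n\<le>K. m n) = J}"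

lemma partitionsD:
  assumes "m \<in> partitions K"
  shows "m 0 = 0" "\<And>n. K < n \<Longrightarrow> m n = 0" "(\<Sum>n\<le>K. n * m n) = K"
  using assms unfolding partitions_def by blast+

lemma partitions_of_lengthD:
  assumes "m \<in> partitions_of_length K J"
  shows "m \<in> partitions K" "(\<Sum>n\<le>K. m n) = J"
  using assms unfolding partitions_of_length_def by blast+

lemma mult_le_size:
  fixes m :: "nat \<Rightarrow> nat"
  assumes "(\<Sum>n\<le>B. n * m n) = K" "n \<le> B"
  shows "n * m n \<le> K"
  using assms member_le_sum[of n "{..B}" "\<lambda>n. n * m n"] by simp

lemma mem_partitions_iff:
  assumes "m 0 = 0" "\<And>n. B < n \<Longrightarrow> m n = 0"
  shows "m \<in> partitions K \<longleftrightarrow> (\<Sum>n\<le>B. n * m n) = K"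
proof
  assume m: "m \<in> partitions K"
  have "(\<Sum>n\<le>B. n * m n) = (\<Sum>n\<le>K. n * m n)"
    using partitionsD(2)[OF m] assms(2) by (intro sum_atMost_eq_if_vanishing) auto
  also have "\<dots> = K"
    by (rule partitionsD(3)[OF m])
  finally show "(\<Sum>n\<le>B. n * m n) = K" .
next
  assume size: "(\<Sum>n\<le>B. n * m n) = K"
  have vanish: "m n = 0" if "K < n" for n
  proof (rule ccontr)
    assume "m n \<noteq> 0"
    then have "n \<le> B"
      using assms(2) leI by meson
    then have "n * m n \<le> K"
      by (rule mult_le_size[OF size])
    moreover have "n \<le> n * m n"
      using \<open>m n \<noteq> 0\<close> by simp
    ultimately show False
      using \<open>K < n\<close> by linarith
  qed
  have "(\<Sum>n\<le>K. n * m n) = (\<Sum>n\<le>B. n * m n)"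
    using vanish assms(2) by (intro sum_atMost_eq_if_vanishing) auto
  also note size
  finally show "m \<in> partitions K"
    unfolding partitions_def using assms(1) vanish by blast
qed

lemma mem_partitions_of_length_iff:
  assumes "m 0 = 0" "\<And>n. B < n \<Longrightarrow> m n = 0"
  shows "m \<in> partitions_of_length K J \<longleftrightarrow> (\<Sum>n\<le>B. n * m n) = K \<and> (\<Sum>n\<le>B. m n) = J"
proof (cases "m \<in> partitions K")
  case True
  then have "(\<Sum>n\<le>K. m n) = (\<Sum>n\<le>B. m n)"
    using assms(2) partitionsD(2)[OF True] by (intro sum_atMost_eq_if_vanishing) auto
  moreover have "(\<Sum>n\<le>B. n * m n) = K"
    using True mem_partitions_iff[of m B K] assms by blast
  ultimately show ?thesis
    using True by (simp add: partitions_of_length_def)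
next
  case False
  then show ?thesis
    using mem_partitions_iff[of m B K] assms by (simp add: partitions_of_length_def)
qed

lemma mem_partitions_iff_fsum:
  assumes "m 0 = 0"
  shows "m \<in> partitions K \<longleftrightarrow> finite {n. m n \<noteq> 0} \<and> fsum (\<lambda>n. int n * int (m n)) = int K"
proof
  assume m: "m \<in> partitions K"
  have "{n. m n \<noteq> 0} \<subseteq> {..K}"
    using partitionsD(2)[OF m] by (auto intro: ccontr simp: not_le)
  then have "finite {n. m n \<noteq> 0}"
    by (rule finite_subset) simp
  moreover have "fsum (\<lambda>n. int n * int (m n)) = int (\<Sum>n\<le>K. n * m n)"
    using partitionsD(2)[OF m] by (simp add: fsum_eq_sum_atMost[of K])
  ultimately show "finite {n. m n \<noteq> 0} \<and> fsum (\<lambda>n. int n * int (m n)) = int K"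
    unfolding partitionsD(3)[OF m] by blast
next
  assume fin_size: "finite {n. m n \<noteq> 0} \<and> fsum (\<lambda>n. int n * int (m n)) = int K"
  then obtain B where B: "\<forall>n\<in>{n. m n \<noteq> 0}. n \<le> B"
    using finite_nat_set_iff_bounded_le by blast
  have vanish: "m n = 0" if "B < n" for n
    using B that by (auto intro: ccontr)
  from fin_size have size: "fsum (\<lambda>n. int n * int (m n)) = int K"
    by blast
  have "int (\<Sum>n\<le>B. n * m n) = fsum (\<lambda>n. int n * int (m n))"
    using vanish by (simp add: fsum_eq_sum_atMost[of B])
  also note size
  finally have "(\<Sum>n\<le>B. n * m n) = K"
    by (simp only: of_nat_eq_iff)
  then show "m \<in> partitions K"
    using mem_partitions_iff[of m B K] assms vanish by blast
qed

lemma partitions_mult_le: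
  assumes "m \<in> partitions K"
  shows "m n \<le> K"
proof -
  have m0: "m 0 = 0" and vanish: "\<And>n. K < n \<Longrightarrow> m n = 0" and size: "(\<Sum>n\<le>K. n * m n) = K"
    using partitionsD[OF assms] by blast+
  show ?thesis
  proof (cases "n = 0 \<or> K < n")
    case True
    with m0 vanish show ?thesis
      by auto
  next
    case False
    then have "m n \<le> n * m n"
      by simp
    also have "\<dots> \<le> K"
      using False by (intro mult_le_size[OF size]) simp
    finally show ?thesis .
  qed
qed

lemma finite_partitions: "finite (partitions K)"
proof (rule finite_subset)
  show "partitions K \<subseteq> {m. \<forall>n. (n \<in> {..K} \<longrightarrow> m n \<in> {..K}) \<and> (n \<notin> {..K} \<longrightarrow> m n = 0)}"
  proof
    fix m
    assume m: "m \<in> partitions K"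
    then show "m \<in> {m. \<forall>n. (n \<in> {..K} \<longrightarrow> m n \<in> {..K}) \<and> (n \<notin> {..K} \<longrightarrow> m n = 0)}"
      using partitions_mult_le[OF m] partitionsD(2)[OF m] by auto
  qed
qed (intro finite_set_of_finite_funs; simp)

lemma finite_partitions_of_length: "finite (partitions_of_length K J)"
  unfolding partitions_of_length_def using finite_partitions by simp

lemma length_le_size:
  fixes m :: "nat \<Rightarrow> nat"
  assumes "m 0 = 0"
  shows "(\<Sum>n\<le>K. m n) \<le> (\<Sum>n\<le>K. n * m n)"
proof (rule sum_mono)
  show "m n \<le> n * m n" for n
    using assms by (cases n) auto
qed

lemma partitions_0: "partitions 0 = {\<lambda>_. 0}"
proof -
  have "m = (\<lambda>_. 0)" if "m \<in> partitions 0" for m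
  proof
    show "m n = 0" for n
      using partitionsD(1,2)[OF that] by (cases n) auto
  qed
  moreover have "(\<lambda>_. 0) \<in> partitions 0"
    by (simp add: partitions_def)
  ultimately show ?thesis
    by blast
qed

lemma partitions_of_length_eq_empty:
  assumes "K < J \<or> (J = 0 \<and> 0 < K)"
  shows "partitions_of_length K J = {}"
proof -
  have False if "m \<in> partitions_of_length K J" for m
  proof -
    have m0: "m 0 = 0" and size: "(\<Sum>n\<le>K. n * m n) = K" and length: "(\<Sum>n\<le>K. m n) = J"
      using partitions_of_lengthD[OF that] partitionsD by blast+
    have "J \<le> K"
      using length_le_size[of m K, OF m0] unfolding size length .
    moreover have "K = 0" if "J = 0"
    proof -
      have "\<forall>n\<le>K. m n = 0"
        using length that by simp
      then have "(\<Sum>n\<le>K. n * m n) = 0"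
        by simp
      with size show ?thesis
        by linarith
    qed
    ultimately show False
      using assms by linarith
  qed
  then show ?thesis
    by blast
qed

lemma sum_partitions_by_length:
  "(\<Sum>m\<in>partitions K. f m) = (\<Sum>J\<le>K. \<Sum>m\<in>partitions_of_length K J. f m)"
proof -
  have "(\<Sum>n\<le>K. m n) \<le> K" if "m \<in> partitions K" for m
    using length_le_size[of m K, OF partitionsD(1)[OF that]] unfolding partitionsD(3)[OF that] .
  then have "(\<lambda>m. \<Sum>n\<le>K. m n) ` partitions K \<subseteq> {..K}"
    by auto
  then have "(\<Sum>J\<le>K. \<Sum>m\<in>{m \<in> partitions K. (\<Sum>n\<le>K. m n) = J}. f m) = (\<Sum>m\<in>partitions K. f m)"
    by (intro sum.group finite_partitions finite_atMost)
  then show ?thesis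
    by (simp add: partitions_of_length_def)
qed

text \<open>\<open>incr_parts a m\<close> adds one to every part of \<open>m\<close> and then \<open>a\<close> parts equal to one, i.e. it puts a
  new first column in front of the Young diagram; \<open>decr_parts\<close> removes the first column.\<close>

definition incr_parts :: "nat \<Rightarrow> (nat \<Rightarrow> nat) \<Rightarrow> nat \<Rightarrow> nat" where
  "incr_parts a m n = (case n of 0 \<Rightarrow> 0 | Suc k \<Rightarrow> if k = 0 then a else m k)"

definition decr_parts :: "(nat \<Rightarrow> nat) \<Rightarrow> nat \<Rightarrow> nat" where
  "decr_parts m k = (if k = 0 then 0 else m (Suc k))"

lemma incr_parts_0 [simp]: "incr_parts a m 0 = 0"
  and incr_parts_1 [simp]: "incr_parts a m (Suc 0) = a"
  and incr_parts_Suc [simp]: "0 < k \<Longrightarrow> incr_parts a m (Suc k) = m k"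
  by (simp_all add: incr_parts_def)

lemma decr_parts_incr_parts: "m 0 = 0 \<Longrightarrow> decr_parts (incr_parts a m) = m"
  by (auto simp: decr_parts_def fun_eq_iff gr0_conv_Suc)

lemma incr_parts_decr_parts: "m 0 = 0 \<Longrightarrow> incr_parts (m 1) (decr_parts m) = m"
  by (auto simp: incr_parts_def decr_parts_def fun_eq_iff split: nat.split)

lemma sum_incr_parts:
  assumes "m 0 = 0"
  shows "(\<Sum>n\<le>Suc B. n * incr_parts a m n) = a + (\<Sum>k\<le>B. k * m k) + (\<Sum>k\<le>B. m k)"
    and "(\<Sum>n\<le>Suc B. incr_parts a m n) = a + (\<Sum>k\<le>B. m k)"
proof -
  have incr: "incr_parts a m (Suc k) = m k + (if k = 0 then a else 0)" for k
    using assms by (cases k) simp_all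
  show "(\<Sum>n\<le>Suc B. n * incr_parts a m n) = a + (\<Sum>k\<le>B. k * m k) + (\<Sum>k\<le>B. m k)"
    unfolding sum.atMost_Suc_shift incr by (simp add: sum.distrib algebra_simps)
  show "(\<Sum>n\<le>Suc B. incr_parts a m n) = a + (\<Sum>k\<le>B. m k)"
    unfolding sum.atMost_Suc_shift incr by (simp add: sum.distrib)
qed

lemma incr_parts_mem_partitions_of_length:
  assumes "a \<le> J" "J \<le> K" "m \<in> partitions_of_length (K - J) (J - a)"
  shows "incr_parts a m \<in> partitions_of_length K J"
proof -
  have m0: "m 0 = 0" and vanish: "\<And>k. K - J < k \<Longrightarrow> m k = 0"
    using partitionsD partitions_of_lengthD(1)[OF assms(3)] by blast+
  then have "(\<Sum>k\<le>K - J. k * m k) = K - J" "(\<Sum>k\<le>K - J. m k) = J - a"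
    using assms(3) mem_partitions_of_length_iff[of m "K - J"] by blast+
  moreover have "incr_parts a m k = 0" if "Suc (K - J) < k" for k
    using that vanish by (auto simp: incr_parts_def split: nat.split)
  ultimately show ?thesis
    using assms(1,2) mem_partitions_of_length_iff[of "incr_parts a m" "Suc (K - J)"] sum_incr_parts[where m=m, OF m0]
    by simp
qed

lemma decr_parts_mem_partitions_of_length:
  assumes "1 \<le> J" "m \<in> partitions_of_length K J"
  shows "m 1 \<le> J" "decr_parts m \<in> partitions_of_length (K - J) (J - m 1)"
proof -
  have "\<not> K < J"
    using assms(2) partitions_of_length_eq_empty[of K J] by auto
  with assms(1) have "K \<noteq> 0"
    by linarith
  then obtain B where K: "K = Suc B"
    using not0_implies_Suc by blast
  have m0: "m 0 = 0" and vanish: "\<And>k. K < k \<Longrightarrow> m k = 0"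
    using partitionsD partitions_of_lengthD(1)[OF assms(2)] by blast+
  have d0: "decr_parts m 0 = 0" and d_vanish: "\<And>k. B < k \<Longrightarrow> decr_parts m k = 0"
    using vanish K by (auto simp: decr_parts_def)
  have "(\<Sum>n\<le>Suc B. n * m n) = K" "(\<Sum>n\<le>Suc B. m n) = J"
    using assms(2) K mem_partitions_of_length_iff[of m K] m0 vanish by simp_all
  moreover note sum_incr_parts[where m="decr_parts m" and B=B and a="m 1", OF d0,
      unfolded incr_parts_decr_parts[where m=m, OF m0]]
  ultimately have "m 1 + (\<Sum>k\<le>B. k * decr_parts m k) + (\<Sum>k\<le>B. decr_parts m k) = K"
    "m 1 + (\<Sum>k\<le>B. decr_parts m k) = J"
    by linarith+
  then show "m 1 \<le> J" "decr_parts m \<in> partitions_of_length (K - J) (J - m 1)"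
    using mem_partitions_of_length_iff[of "decr_parts m" B] d0 d_vanish by auto
qed

lemma sum_partitions_of_length_decomp:
  assumes "1 \<le> J" "J \<le> K"
  shows "(\<Sum>m\<in>partitions_of_length K J. f m)
    = (\<Sum>a\<le>J. \<Sum>m\<in>partitions_of_length (K - J) (J - a). f (incr_parts a m))"
proof -
  have "(\<Sum>m\<in>partitions_of_length K J. f m)
      = (\<Sum>(a, m)\<in>(SIGMA a:{..J}. partitions_of_length (K - J) (J - a)). f (incr_parts a m))"
  proof (rule sum.reindex_bij_witness[where j = "\<lambda>m. (m 1, decr_parts m)" and i = "\<lambda>(a, m). incr_parts a m"])
    fix m
    assume m: "m \<in> partitions_of_length K J"
    then have "m 0 = 0"
      using partitionsD(1) partitions_of_lengthD(1) by blast
    then show "(case (m 1, decr_parts m) of (a, m) \<Rightarrow> incr_parts a m) = m"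
      and "(case (m 1, decr_parts m) of (a, m) \<Rightarrow> f (incr_parts a m)) = f m"
      using incr_parts_decr_parts by simp_all
    show "(m 1, decr_parts m) \<in> (SIGMA a:{..J}. partitions_of_length (K - J) (J - a))"
      using decr_parts_mem_partitions_of_length[OF assms(1) m] by simp
  next
    fix p
    assume "p \<in> (SIGMA a:{..J}. partitions_of_length (K - J) (J - a))"
    then obtain a m where p: "p = (a, m)" "a \<le> J" "m \<in> partitions_of_length (K - J) (J - a)"
      by auto
    then have "m 0 = 0"
      using partitionsD(1) partitions_of_lengthD(1) by blast
    with p show "((case p of (a, m) \<Rightarrow> incr_parts a m) 1, decr_parts (case p of (a, m) \<Rightarrow> incr_parts a m)) = p"
      by (simp add: decr_parts_incr_parts)
    show "(case p of (a, m) \<Rightarrow> incr_parts a m) \<in> partitions_of_length K J"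
      using p assms(2) incr_parts_mem_partitions_of_length by simp
  qed
  also have "\<dots> = (\<Sum>a\<le>J. \<Sum>m\<in>partitions_of_length (K - J) (J - a). f (incr_parts a m))"
    by (rule sum.Sigma[symmetric]) (auto simp: finite_partitions_of_length)
  finally show ?thesis .
qed

section \<open>Vacancy numbers and the partition sums\<close>

text \<open>\<open>vacancy (N - 2M) m n\<close> and \<open>vacancy (L - N) m' n\<close> are the paper's \<open>P\<^sub>n\<close> and \<open>P'\<^sub>n\<close>; the
  parameter \<open>c\<close> of \<open>config_weight\<close> is \<open>0\<close> for the factors of \<open>Z\<close> and \<open>1\<close> for the shifted ones of \<open>Ztilde\<close>.\<close>

definition vacancy :: "int \<Rightarrow> (nat \<Rightarrow> nat) \<Rightarrow> nat \<Rightarrow> int" where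
  "vacancy X m n = X + 2 * fsum (\<lambda>k. if n < k then (int k - int n) * int (m k) else 0)"

definition config_weight :: "int \<Rightarrow> int \<Rightarrow> (nat \<Rightarrow> nat) \<Rightarrow> int" where
  "config_weight c X m = fprod_pos (\<lambda>n. gbinom (vacancy X m n + int (m n) + c * int n) (m n))"

lemma vacancy_eq_sum:
  assumes "\<And>k. B < k \<Longrightarrow> m k = 0"
  shows "vacancy X m n = X + 2 * (\<Sum>k\<le>B. if n < k then (int k - int n) * int (m k) else 0)"
  unfolding vacancy_def using assms by (subst fsum_eq_sum_atMost[of B]) auto

lemma vacancy_incr_parts_Suc:
  assumes "\<And>k. B < k \<Longrightarrow> m k = 0"
  shows "vacancy X (incr_parts a m) (Suc n) = vacancy X m n"
proof -
  have "\<And>k. Suc B < k \<Longrightarrow> incr_parts a m k = 0"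
    using assms by (auto simp: incr_parts_def split: nat.split)
  moreover have "(\<Sum>k\<le>Suc B. if Suc n < k then (int k - int (Suc n)) * int (incr_parts a m k) else 0)
      = (\<Sum>k\<le>B. if n < k then (int k - int n) * int (m k) else 0)"
    unfolding sum.atMost_Suc_shift by (simp, intro sum.cong) (auto simp: incr_parts_def)
  ultimately show ?thesis
    using assms by (simp add: vacancy_eq_sum[of "Suc B"] vacancy_eq_sum[of B])
qed

lemma config_weight_incr_parts:
  assumes "m 0 = 0" "\<And>k. B < k \<Longrightarrow> m k = 0"
  shows "config_weight c X (incr_parts a m)
    = gbinom (X + 2 * int (\<Sum>k\<le>B. k * m k) + int a + c) a * config_weight c (X + c) m"
proof -
  define w where "w n = gbinom (vacancy X (incr_parts a m) n + int (incr_parts a m n) + c * int n) (incr_parts a m n)" for n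
  have "vacancy X (incr_parts a m) 1 = X + 2 * int (\<Sum>k\<le>B. k * m k)"
    using vacancy_incr_parts_Suc[of B m X a 0] assms
    by (simp add: vacancy_eq_sum[of B] of_nat_sum, intro sum.cong) auto
  then have first: "w 1 = gbinom (X + 2 * int (\<Sum>k\<le>B. k * m k) + int a + c) a"
    by (simp add: w_def)
  have "config_weight c X (incr_parts a m) = (\<Prod>n = 1..Suc B. w n)"
    unfolding config_weight_def w_def using assms(2)
    by (intro fprod_pos_eq_prod) (auto simp: incr_parts_def split: nat.split)
  also have "\<dots> = w 1 * (\<Prod>n = Suc 1..Suc B. w n)"
    by (rule prod.atLeast_Suc_atMost) simp
  also have "\<dots> = w 1 * (\<Prod>n = 1..B. w (Suc n))"
    by (simp only: prod.shift_bounds_cl_Suc_ivl)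
  also have "(\<Prod>n = 1..B. w (Suc n)) = (\<Prod>n = 1..B. gbinom (vacancy (X + c) m n + int (m n) + c * int n) (m n))"
    using vacancy_incr_parts_Suc[of B m X a] assms(2) by (intro prod.cong) (simp_all add: w_def vacancy_def algebra_simps)
  also have "\<dots> = config_weight c (X + c) m"
    unfolding config_weight_def using assms(2) by (intro fprod_pos_eq_prod[symmetric]) auto
  finally show ?thesis
    unfolding first .
qed

lemma config_weight_zero [simp]: "config_weight c X (\<lambda>_. 0) = 1"
  by (simp add: config_weight_def fprod_pos_def)

definition weight_sum :: "int \<Rightarrow> int \<Rightarrow> nat \<Rightarrow> nat \<Rightarrow> int" where
  "weight_sum c X K J = (\<Sum>m\<in>partitions_of_length K J. config_weight c X m)"

lemma weight_sum_rec:
  assumes "1 \<le> J" "J \<le> K"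
  shows "weight_sum c X K J
    = (\<Sum>a\<le>J. gbinom (X + 2 * int (K - J) + int a + c) a * weight_sum c (X + c) (K - J) (J - a))"
  unfolding weight_sum_def sum_partitions_of_length_decomp[OF assms] sum_distrib_left
proof (intro sum.cong refl)
  fix a m
  assume "m \<in> partitions_of_length (K - J) (J - a)"
  then have "m 0 = 0" "\<And>k. K - J < k \<Longrightarrow> m k = 0" "(\<Sum>k\<le>K - J. k * m k) = K - J"
    using partitionsD partitions_of_lengthD(1) by blast+
  then show "config_weight c X (incr_parts a m) = gbinom (X + 2 * int (K - J) + int a + c) a * config_weight c (X + c) m"
    using config_weight_incr_parts[of m "K - J" c X a] by simp
qed

lemma weight_sum_size_0: "weight_sum c X 0 J = (if J = 0 then 1 else 0)"
proof -
  have "partitions_of_length 0 J = (if J = 0 then {\<lambda>_. 0} else {})"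
    by (auto simp: partitions_of_length_def partitions_0)
  then show ?thesis
    by (simp add: weight_sum_def)
qed

lemma weight_sum_eq_0:
  assumes "K < J \<or> (J = 0 \<and> 0 < K)"
  shows "weight_sum c X K J = 0"
  using assms by (simp add: weight_sum_def partitions_of_length_eq_empty)

lemma weight_sum_diag: "weight_sum c X (Suc k) (Suc k) = gbinom (X + int (Suc k) + c) (Suc k)"
proof -
  have "weight_sum c X (Suc k) (Suc k) = (\<Sum>a\<le>Suc k. gbinom (X + int a + c) a * weight_sum c (X + c) 0 (Suc k - a))"
    using weight_sum_rec[of "Suc k" "Suc k" c X] by simp
  also have "\<dots> = (\<Sum>a\<le>Suc k. if a = Suc k then gbinom (X + int a + c) a else 0)"
    by (intro sum.cong) (auto simp: weight_sum_size_0)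
  finally show ?thesis
    by simp
qed

lemma weight_sum_Suc_Suc:
  assumes "j < k"
  shows "weight_sum c X (Suc k) (Suc j)
    = (\<Sum>i\<le>j. gbinom (X + c + 2 * int (k - j) + int (j - i)) (j - i) * weight_sum c (X + c) (k - j) (Suc i))"
proof -
  define f where "f a = gbinom (X + c + 2 * int (k - j) + int a) a * weight_sum c (X + c) (k - j) (Suc j - a)" for a
  have "weight_sum c X (Suc k) (Suc j) = (\<Sum>a\<le>Suc j. f a)"
    using weight_sum_rec[of "Suc j" "Suc k" c X] assms by (simp add: f_def algebra_simps)
  also have "\<dots> = (\<Sum>a\<le>j. f a)"
    using assms by (simp add: f_def weight_sum_eq_0)
  also have "\<dots> = (\<Sum>i\<le>j. f (j - i))"
    using sum.nat_diff_reindex[of f "Suc j"] by (simp add: lessThan_Suc_atMost)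
  also have "\<dots> = (\<Sum>i\<le>j. gbinom (X + c + 2 * int (k - j) + int (j - i)) (j - i) * weight_sum c (X + c) (k - j) (Suc i))"
    by (intro sum.cong) (auto simp: f_def Suc_diff_le)
  finally show ?thesis .
qed

lemma weight_sum_1_Suc_Suc:
  "weight_sum 1 X (Suc k) (Suc j) = int (k choose j) * gbinom (X + int k + 2) (Suc j)"
proof (induction k arbitrary: X j rule: less_induct)
  case (less k)
  consider "k < j" | "j = k" | "j < k"
    by linarith
  then show ?case
  proof cases
    case 1
    then show ?thesis
      by (simp add: weight_sum_eq_0)
  next
    case 2
    then show ?thesis
      by (simp add: weight_sum_diag algebra_simps)
  next
    case 3
    define r where "r = k - Suc j"
    have r: "k - j = Suc r" and k: "k = Suc (r + j)" and "r < k"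
      using 3 by (simp_all add: r_def)
    have "weight_sum 1 X (Suc k) (Suc j) = (\<Sum>i\<le>j. gbinom (X + 1 + 2 * int (Suc r) + int (j - i)) (j - i)
        * (int (r choose (i + 0)) * gbinom (X + int r + 3) (i + 1)))"
      unfolding weight_sum_Suc_Suc[OF 3] r less.IH[OF \<open>r < k\<close>] by (simp add: algebra_simps)
    also have "\<dots> = int (r + j + 1 choose (j + 0)) * gbinom (X + int r + 3 + int (j + 0)) (j + 1)"
      by (rule gbinom_triple_sum) simp_all
    finally show ?thesis
      by (simp add: k algebra_simps)
  qed
qed

lemma weight_sum_0_Suc_Suc:
  "weight_sum 0 X (Suc k) (Suc j)
    = int (k choose j) * gbinom (X + int k + 2) (Suc j) - int (Suc k choose Suc j) * gbinom (X + int k + 1) j"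
proof (induction k arbitrary: j rule: less_induct)
  case (less k)
  have Pascal: "int (k choose j) * gbinom (X + int k + 2) (Suc j) - int (Suc k choose Suc j) * gbinom (X + int k + 1) j
      = int (k choose j) * gbinom (X + int k + 1) (Suc j) - int (k choose Suc j) * gbinom (X + int k + 1) j"
    using gbinom_Suc_Suc[of "X + int k + 1" j] by (simp add: algebra_simps)
  consider "k < j" | "j = k" | "j < k"
    by linarith
  then show ?case
  proof cases
    case 1
    then show ?thesis
      by (simp add: weight_sum_eq_0 binomial_eq_0)
  next
    case 2
    then show ?thesis
      unfolding Pascal by (simp add: weight_sum_diag algebra_simps)
  next
    case 3
    define r where "r = k - Suc j"
    have r: "k - j = Suc r" and k: "k = Suc (r + j)" and "r < k"
      using 3 by (simp_all add: r_def)
    define T where "T = X + 2 * int (Suc r)"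
    have "weight_sum 0 X (Suc k) (Suc j)
        = (\<Sum>i\<le>j. gbinom (T + int (j - i)) (j - i) * (int (r choose (i + 0)) * gbinom (X + int r + 2) (i + 1)))
        - (\<Sum>i\<le>j. gbinom (T + int (j - i)) (j - i) * (int (Suc r choose (i + 1)) * gbinom (X + int r + 1) (i + 0)))"
      unfolding weight_sum_Suc_Suc[OF 3] r add_0_right less.IH[OF \<open>r < k\<close>] T_def
      by (simp add: right_diff_distrib sum_subtractf del: binomial_Suc_Suc)
    also have "\<dots> = int (r + j + 1 choose (j + 0)) * gbinom (X + int r + 2 + int (j + 0)) (j + 1)
        - int (Suc r + j + 0 choose (j + 1)) * gbinom (X + int r + 1 + int (j + 1)) (j + 0)"
      by (subst (1 2) gbinom_triple_sum) (simp_all add: T_def)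
    also have "\<dots> = int (k choose j) * gbinom (X + int k + 2) (Suc j) - int (Suc k choose Suc j) * gbinom (X + int k + 1) j"
      unfolding Pascal by (simp add: k algebra_simps del: binomial_Suc_Suc)
    finally show ?thesis .
  qed
qed

lemma sum_config_weight_1: "(\<Sum>m\<in>partitions K. config_weight 1 X m) = gbinom (X + 2 * int K) K"
proof (cases K)
  case 0
  then show ?thesis
    by (simp add: partitions_0)
next
  case (Suc k)
  have "(\<Sum>m\<in>partitions K. config_weight 1 X m) = (\<Sum>j\<le>k. gbinom (X + int k + 2) (j + 1) * int (k + 0 choose (j + 0)))"
    unfolding sum_partitions_by_length Suc sum.atMost_Suc_shift weight_sum_def[symmetric]
    by (simp add: weight_sum_eq_0 weight_sum_1_Suc_Suc mult.commute)
  also have "\<dots> = gbinom (X + int k + 2 + int (k + 0)) (k + 1)"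
    by (rule gbinom_Vandermonde_shifted) simp
  finally show ?thesis
    by (simp add: Suc algebra_simps)
qed

lemma sum_config_weight_0: "(\<Sum>m\<in>partitions K. config_weight 0 X m) = gbinom_diff (X + 2 * int K) K"
proof (cases K)
  case 0
  then show ?thesis
    by (simp add: partitions_0 gbinom_diff_def)
next
  case (Suc k)
  have "(\<Sum>m\<in>partitions K. config_weight 0 X m)
      = (\<Sum>j\<le>k. gbinom (X + int k + 2) (j + 1) * int (k + 0 choose (j + 0)))
        - (\<Sum>j\<le>k. gbinom (X + int k + 1) (j + 0) * int (k + 1 choose (j + 1)))"
    unfolding sum_partitions_by_length Suc sum.atMost_Suc_shift weight_sum_def[symmetric]
    by (simp add: weight_sum_eq_0 weight_sum_0_Suc_Suc sum_subtractf mult.commute del: binomial_Suc_Suc)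
  also have "\<dots> = gbinom (X + int k + 2 + int (k + 0)) (k + 1) - gbinom (X + int k + 1 + int (k + 1)) (k + 0)"
    by (subst (1 2) gbinom_Vandermonde_shifted) simp_all
  finally show ?thesis
    by (simp add: Suc gbinom_diff_def algebra_simps)
qed

section \<open>The configuration sums\<close>

lemma mem_Zconf_iff:
  "(Nr, m, m') \<in> Zconf N M
    \<longleftrightarrow> (\<exists>k. m' \<in> partitions k \<and> m \<in> partitions (M - k) \<and> k \<le> M \<and> Nr + 2 * k = N)"
proof -
  define s where "s m = fsum (\<lambda>n. int n * int (m n))" for m :: "nat \<Rightarrow> nat"
  have s_nonneg: "0 \<le> s m" for m
    by (simp add: s_def fsum_nonneg)
  have s_add: "fsum (\<lambda>n. int n * (int (m n) + int (m' n))) = s m + s m'"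
    if "finite {n. m n \<noteq> 0}" "finite {n. m' n \<noteq> 0}"
    using fsum_add[of "\<lambda>n. int n * int (m n)" "\<lambda>n. int n * int (m' n)"] that
    by (simp add: s_def algebra_simps finite_subset[OF _ that(1)] finite_subset[OF _ that(2)])
  show ?thesis
  proof
    assume "(Nr, m, m') \<in> Zconf N M"
    then have m0: "m 0 = 0" "m' 0 = 0" and fin: "finite {n. m n \<noteq> 0}" "finite {n. m' n \<noteq> 0}"
      and N: "int N = int Nr + 2 * s m'" and M: "int M = s m + s m'"
      using s_add by (auto simp: Zconf_def s_def)
    define k where "k = nat (s m')"
    have k: "s m' = int k"
      using s_nonneg by (simp add: k_def)
    with M s_nonneg[of m] have "k \<le> M" "s m = int (M - k)"
      by auto
    with m0 fin k N show "\<exists>k. m' \<in> partitions k \<and> m \<in> partitions (M - k) \<and> k \<le> M \<and> Nr + 2 * k = N"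
      by (intro exI[of _ k]) (auto simp: mem_partitions_iff_fsum s_def)
  next
    assume "\<exists>k. m' \<in> partitions k \<and> m \<in> partitions (M - k) \<and> k \<le> M \<and> Nr + 2 * k = N"
    then obtain k where m': "m' \<in> partitions k" and m: "m \<in> partitions (M - k)" and "k \<le> M" "Nr + 2 * k = N"
      by blast
    moreover have "m 0 = 0" "m' 0 = 0"
      using partitionsD(1) m m' by blast+
    ultimately show "(Nr, m, m') \<in> Zconf N M"
      using mem_partitions_iff_fsum[of m "M - k"] mem_partitions_iff_fsum[of m' k] s_add
      by (auto simp: Zconf_def s_def)
  qed
qed

lemma sum_Zconf:
  "(\<Sum>(Nr, m, m')\<in>Zconf N M. f Nr m m')
    = (\<Sum>k | k \<le> M \<and> 2 * k \<le> N. \<Sum>m'\<in>partitions k. \<Sum>m\<in>partitions (M - k). f (N - 2 * k) m m')"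
proof -
  define S where "S = (SIGMA k:{k. k \<le> M \<and> 2 * k \<le> N}. partitions k \<times> partitions (M - k))"
  have to_S: "((N - Nr) div 2, m', m) \<in> S \<and> N - 2 * ((N - Nr) div 2) = Nr" if "(Nr, m, m') \<in> Zconf N M" for Nr m m'
    using that by (auto simp: mem_Zconf_iff S_def)
  have to_Zconf: "(N - 2 * k, m, m') \<in> Zconf N M \<and> (N - (N - 2 * k)) div 2 = k" if "(k, m', m) \<in> S" for k m' m
    using that by (auto simp: mem_Zconf_iff S_def intro!: exI[of _ k])
  have "(\<Sum>(Nr, m, m')\<in>Zconf N M. f Nr m m') = (\<Sum>(k, m', m)\<in>S. f (N - 2 * k) m m')"
    by (rule sum.reindex_bij_witness[where j = "\<lambda>(Nr, m, m'). ((N - Nr) div 2, m', m)"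
          and i = "\<lambda>(k, m', m). (N - 2 * k, m, m')"])
      (auto dest: to_S to_Zconf)
  also have "\<dots> = (\<Sum>k | k \<le> M \<and> 2 * k \<le> N. \<Sum>m'\<in>partitions k. \<Sum>m\<in>partitions (M - k). f (N - 2 * k) m m')"
    by (simp add: S_def sum.Sigma sum.cartesian_product finite_partitions split_def)
  finally show ?thesis .
qed

lemma Pp_eq_vacancy: "Pp L N m' n = vacancy (int L - int N) m' n"
  by (simp add: Pp_def vacancy_def)

lemma P_eq_vacancy: "P N M m n = vacancy (int N - 2 * int M) m n"
  by (simp add: P_def vacancy_def)

lemma sum_Zconf_config_weight:
  "(\<Sum>(Nr, m, m')\<in>Zconf N M. gbinom (int L) Nr * fprod_pos (\<lambda>n.
        gbinom (Pp L N m' n + int (m' n) + c * int n) (m' n) * gbinom (P N M m n + int (m n)) (m n)))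
    = (\<Sum>k | k \<le> M \<and> 2 * k \<le> N. gbinom (int L) (N - 2 * k)
        * (\<Sum>m'\<in>partitions k. config_weight c (int L - int N) m')
        * (\<Sum>m\<in>partitions (M - k). config_weight 0 (int N - 2 * int M) m))"
proof -
  have summand: "fprod_pos (\<lambda>n. gbinom (Pp L N m' n + int (m' n) + c * int n) (m' n) * gbinom (P N M m n + int (m n)) (m n))
      = config_weight c (int L - int N) m' * config_weight 0 (int N - 2 * int M) m"
    if "m' \<in> partitions k" "m \<in> partitions (M - k)" "k \<le> M" for k m m'
  proof -
    have vanish: "m' n = 0" "m n = 0" if "M < n" for n
      using partitionsD(2) \<open>m' \<in> partitions k\<close> \<open>m \<in> partitions (M - k)\<close> \<open>k \<le> M\<close> that by force+
    show ?thesis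
      unfolding config_weight_def Pp_eq_vacancy P_eq_vacancy mult_zero_left add_0_right
      by (rule fprod_pos_mult[of M]) (simp_all add: vanish)
  qed
  have "(\<Sum>(Nr, m, m')\<in>Zconf N M. gbinom (int L) Nr * fprod_pos (\<lambda>n.
        gbinom (Pp L N m' n + int (m' n) + c * int n) (m' n) * gbinom (P N M m n + int (m n)) (m n)))
      = (\<Sum>k | k \<le> M \<and> 2 * k \<le> N. \<Sum>m'\<in>partitions k. \<Sum>m\<in>partitions (M - k). gbinom (int L) (N - 2 * k)
        * (config_weight c (int L - int N) m' * config_weight 0 (int N - 2 * int M) m))"
    unfolding sum_Zconf by (intro sum.cong refl) (simp add: summand)
  also have "\<dots> = (\<Sum>k | k \<le> M \<and> 2 * k \<le> N. gbinom (int L) (N - 2 * k)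
        * (\<Sum>m'\<in>partitions k. config_weight c (int L - int N) m')
        * (\<Sum>m\<in>partitions (M - k). config_weight 0 (int N - 2 * int M) m))"
    by (intro sum.cong refl, subst mult.assoc, subst sum_product) (simp add: sum_distrib_left)
  finally show ?thesis .
qed

lemma Z_eq_sum:
  "Z L N M = (\<Sum>k | k \<le> M \<and> 2 * k \<le> N. gbinom (int L) (N - 2 * k)
      * gbinom_diff (int L - int N + 2 * int k) k * gbinom_diff (int N - 2 * int k) (M - k))"
  unfolding Z_def sum_Zconf_config_weight[where c=0, simplified]
proof (intro sum.cong refl)
  fix k
  assume "k \<in> {k. k \<le> M \<and> 2 * k \<le> N}"
  then have "int N - 2 * int M + 2 * int (M - k) = int N - 2 * int k"
    by (simp add: of_nat_diff)
  then show "gbinom (int L) (N - 2 * k) * (\<Sum>m'\<in>partitions k. config_weight 0 (int L - int N) m')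
      * (\<Sum>m\<in>partitions (M - k). config_weight 0 (int N - 2 * int M) m)
    = gbinom (int L) (N - 2 * k) * gbinom_diff (int L - int N + 2 * int k) k * gbinom_diff (int N - 2 * int k) (M - k)"
    by (simp add: sum_config_weight_0)
qed

lemma Ztilde_eq_sum:
  "Ztilde L N M = (\<Sum>k | k \<le> M \<and> 2 * k \<le> N. gbinom (int L) (N - 2 * k)
      * gbinom (int L - int N + 2 * int k) k * gbinom_diff (int N - 2 * int k) (M - k))"
  unfolding Ztilde_def sum_Zconf_config_weight[where c=1, simplified]
proof (intro sum.cong refl)
  fix k
  assume "k \<in> {k. k \<le> M \<and> 2 * k \<le> N}"
  then have "int N - 2 * int M + 2 * int (M - k) = int N - 2 * int k"
    by (simp add: of_nat_diff)
  then show "gbinom (int L) (N - 2 * k) * (\<Sum>m'\<in>partitions k. config_weight 1 (int L - int N) m')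
      * (\<Sum>m\<in>partitions (M - k). config_weight 0 (int N - 2 * int M) m)
    = gbinom (int L) (N - 2 * k) * gbinom (int L - int N + 2 * int k) k * gbinom_diff (int N - 2 * int k) (M - k)"
    by (simp add: sum_config_weight_0 sum_config_weight_1)
qed

section \<open>Coefficients of the generating polynomials\<close>

lemma binomial_ring_bounded:
  fixes x :: "'a::comm_ring_1"
  assumes "n \<le> D"
  shows "(1 + x) ^ n = (\<Sum>k\<le>D. of_int (gbinom (int n) k) * x ^ k)"
proof -
  have "(1 + x) ^ n = (\<Sum>k\<le>n. of_nat (n choose k) * x ^ k)"
    using binomial_ring[of x 1 n] by (simp add: add.commute)
  also have "\<dots> = (\<Sum>k\<le>D. of_nat (n choose k) * x ^ k)"
    using assms by (intro sum.mono_neutral_left) (auto simp: binomial_eq_0)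
  finally show ?thesis
    by (simp add: gbinom_of_nat)
qed

lemma binomial_ring_times_one_minus:
  fixes x :: "'a::comm_ring_1"
  assumes "Suc n \<le> D"
  shows "(1 + x) ^ n * (1 - x) = (\<Sum>k\<le>D. of_int (gbinom_diff (int n) k) * x ^ k)"
proof -
  obtain D' where D: "D = Suc D'"
    using assms Suc_le_D by blast
  have "(1 + x) ^ n * x = (\<Sum>k\<le>D'. of_int (gbinom (int n) k) * x ^ Suc k)"
    using binomial_ring_bounded[of n D' x] assms D by (simp add: sum_distrib_right sum_distrib_left mult_ac)
  also have "\<dots> = (\<Sum>k\<le>D. of_int (if k = 0 then 0 else gbinom (int n) (k - 1)) * x ^ k)"
    unfolding D sum.atMost_Suc_shift by simp
  finally have "(1 + x) ^ n * x = \<dots>" .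
  moreover have "(1 + x) ^ n = (\<Sum>k\<le>D. of_int (gbinom (int n) k) * x ^ k)"
    using assms by (intro binomial_ring_bounded) simp
  ultimately show ?thesis
    by (simp add: right_diff_distrib gbinom_diff_def sum_subtractf left_diff_distrib)
qed

lemma monom_eq_var_power: "of_int c * var_u ^ a * var_v ^ b = monom (monom c b) a"
proof -
  have "var_u ^ a = monom 1 a" "var_v ^ b = monom (monom 1 b) 0" "(of_int c :: int poly poly) = monom (monom c 0) 0"
    by (simp_all add: var_u_def var_v_def monom_altdef poly_const_pow of_int_poly monom_0)
  then show ?thesis
    by (simp add: mult_monom)
qed

lemma sum_triple_delta:
  fixes F :: "nat \<Rightarrow> nat \<Rightarrow> nat \<Rightarrow> 'a::comm_monoid_add"
  assumes "M \<le> D"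
  shows "(\<Sum>r\<le>L. \<Sum>k\<le>D. \<Sum>j\<le>D. if r + 2 * j = N \<and> k + j = M then F r k j else 0)
    = (\<Sum>j | j \<le> M \<and> 2 * j \<le> N \<and> N - 2 * j \<le> L. F (N - 2 * j) (M - j) j)"
proof -
  define P where "P j \<longleftrightarrow> j \<le> M \<and> 2 * j \<le> N \<and> N - 2 * j \<le> L" for j
  have inner_k: "(\<Sum>k\<le>D. if r + 2 * j = N \<and> k + j = M then F r k j else 0)
      = (if r + 2 * j = N \<and> j \<le> M then F r (M - j) j else 0)" for r j
  proof -
    have "(\<Sum>k\<le>D. if r + 2 * j = N \<and> k + j = M then F r k j else 0)
        = (\<Sum>k\<le>D. if k = M - j then (if r + 2 * j = N \<and> j \<le> M then F r k j else 0) else 0)"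
      by (intro sum.cong refl) auto
    moreover have "M - j \<le> D"
      using assms by linarith
    ultimately show ?thesis
      by (simp add: sum.delta)
  qed
  have inner: "(\<Sum>r\<le>L. \<Sum>k\<le>D. if r + 2 * j = N \<and> k + j = M then F r k j else 0)
      = (if P j then F (N - 2 * j) (M - j) j else 0)" for j
  proof -
    have "(\<Sum>r\<le>L. \<Sum>k\<le>D. if r + 2 * j = N \<and> k + j = M then F r k j else 0)
        = (\<Sum>r\<le>L. if r = N - 2 * j then (if 2 * j \<le> N \<and> j \<le> M then F r (M - j) j else 0) else 0)"
      unfolding inner_k by (intro sum.cong refl) auto
    then show ?thesis
      by (simp add: sum.delta P_def conj_ac)
  qed
  have "(\<Sum>r\<le>L. \<Sum>k\<le>D. \<Sum>j\<le>D. if r + 2 * j = N \<and> k + j = M then F r k j else 0)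
      = (\<Sum>r\<le>L. \<Sum>j\<le>D. \<Sum>k\<le>D. if r + 2 * j = N \<and> k + j = M then F r k j else 0)"
    by (rule sum.cong[OF refl], rule sum.swap)
  also have "\<dots> = (\<Sum>j\<le>D. \<Sum>r\<le>L. \<Sum>k\<le>D. if r + 2 * j = N \<and> k + j = M then F r k j else 0)"
    by (rule sum.swap)
  also have "\<dots> = (\<Sum>j\<in>{j \<in> {..D}. P j}. F (N - 2 * j) (M - j) j)"
    unfolding inner by (rule sum.inter_filter[symmetric]) simp
  also have "{j \<in> {..D}. P j} = {j. j \<le> M \<and> 2 * j \<le> N \<and> N - 2 * j \<le> L}"
    using assms by (auto simp: P_def)
  finally show ?thesis .
qed

lemma coeff_binomial_expansion:
  fixes a b :: "nat \<Rightarrow> nat \<Rightarrow> int"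
  assumes "M \<le> D"
    and A: "\<And>r. r \<le> L \<Longrightarrow> A r = (\<Sum>k\<le>D. of_int (a r k) * var_v ^ k)"
    and B: "\<And>r. r \<le> L \<Longrightarrow> B r = (\<Sum>j\<le>D. of_int (b r j) * (var_u ^ 2 * var_v) ^ j)"
  shows "coeff (coeff (\<Sum>r\<le>L. of_nat (L choose r) * var_u ^ r * A r * B r) N) M
    = (\<Sum>j | j \<le> M \<and> 2 * j \<le> N. int (L choose (N - 2 * j)) * a (N - 2 * j) (M - j) * b (N - 2 * j) j)"
proof -
  define F where "F r k j = int (L choose r) * a r k * b r j" for r k j
  have "(\<Sum>r\<le>L. of_nat (L choose r) * var_u ^ r * A r * B r)
      = (\<Sum>r\<le>L. \<Sum>k\<le>D. \<Sum>j\<le>D. of_int (F r k j) * var_u ^ (r + 2 * j) * var_v ^ (k + j))"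
    using A B by (intro sum.cong refl)
      (simp add: F_def sum_distrib_left sum_distrib_right power_mult_distrib power_add mult_ac flip: power_mult)
  then have "coeff (coeff (\<Sum>r\<le>L. of_nat (L choose r) * var_u ^ r * A r * B r) N) M
      = (\<Sum>r\<le>L. \<Sum>k\<le>D. \<Sum>j\<le>D. if r + 2 * j = N \<and> k + j = M then F r k j else 0)"
    by (simp add: monom_eq_var_power coeff_sum if_distrib[of "\<lambda>p. coeff p M"] cong: if_cong)
      (intro sum.cong refl; simp)
  also have "\<dots> = (\<Sum>j | j \<le> M \<and> 2 * j \<le> N \<and> N - 2 * j \<le> L. F (N - 2 * j) (M - j) j)"
    by (rule sum_triple_delta[OF assms(1)])
  also have "\<dots> = (\<Sum>j | j \<le> M \<and> 2 * j \<le> N. F (N - 2 * j) (M - j) j)"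
    by (rule sum.mono_neutral_left) (auto simp: F_def binomial_eq_0)
  finally show ?thesis
    by (simp add: F_def)
qed

lemma binomial_expansion_uv:
  "(1 + var_u) ^ L * (1 + var_u * var_v) ^ L
    = (\<Sum>r\<le>L. of_nat (L choose r) * var_u ^ r * (1 + var_v) ^ r * (1 + var_u ^ 2 * var_v) ^ (L - r))"
proof -
  have "(1 + var_u) ^ L * (1 + var_u * var_v) ^ L = ((1 + var_u) * (1 + var_u * var_v)) ^ L"
    by (simp add: power_mult_distrib)
  also have "(1 + var_u) * (1 + var_u * var_v) = var_u * (1 + var_v) + (1 + var_u ^ 2 * var_v)"
    by (simp add: algebra_simps power2_eq_square)
  finally show ?thesis
    by (simp only: binomial_ring power_mult_distrib mult.assoc)
qed

lemma coeff_Z_generating_polynomial: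
  "coeff (coeff ((1 + var_u) ^ L * (1 + var_u * var_v) ^ L * (1 - var_u ^ 2 * var_v) * (1 - var_v)) N) M = Z L N M"
proof -
  have "(1 + var_u) ^ L * (1 + var_u * var_v) ^ L * (1 - var_u ^ 2 * var_v) * (1 - var_v)
      = (\<Sum>r\<le>L. of_nat (L choose r) * var_u ^ r * ((1 + var_v) ^ r * (1 - var_v))
          * ((1 + var_u ^ 2 * var_v) ^ (L - r) * (1 - var_u ^ 2 * var_v)))"
    unfolding binomial_expansion_uv sum_distrib_right by (simp add: mult_ac)
  then have "coeff (coeff ((1 + var_u) ^ L * (1 + var_u * var_v) ^ L * (1 - var_u ^ 2 * var_v) * (1 - var_v)) N) M
      = (\<Sum>j | j \<le> M \<and> 2 * j \<le> N. int (L choose (N - 2 * j))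
          * gbinom_diff (int (N - 2 * j)) (M - j) * gbinom_diff (int (L - (N - 2 * j))) j)"
    by (simp only:) (rule coeff_binomial_expansion[where D = "L + M + 1"]; (rule binomial_ring_times_one_minus)?; simp)
  also have "\<dots> = Z L N M"
    unfolding Z_eq_sum
  proof (intro sum.cong refl)
    fix j
    assume "j \<in> {j. j \<le> M \<and> 2 * j \<le> N}"
    then show "int (L choose (N - 2 * j)) * gbinom_diff (int (N - 2 * j)) (M - j) * gbinom_diff (int (L - (N - 2 * j))) j
        = gbinom (int L) (N - 2 * j) * gbinom_diff (int L - int N + 2 * int j) j * gbinom_diff (int N - 2 * int j) (M - j)"
      by (cases "N - 2 * j \<le> L") (simp_all add: gbinom_of_nat of_nat_diff binomial_eq_0 algebra_simps)
  qed
  finally show ?thesis .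
qed

lemma coeff_Ztilde_generating_polynomial:
  "coeff (coeff ((1 + var_u) ^ L * (1 + var_u * var_v) ^ L * (1 - var_v)) N) M = Ztilde L N M"
proof -
  have "(1 + var_u) ^ L * (1 + var_u * var_v) ^ L * (1 - var_v)
      = (\<Sum>r\<le>L. of_nat (L choose r) * var_u ^ r * ((1 + var_v) ^ r * (1 - var_v)) * (1 + var_u ^ 2 * var_v) ^ (L - r))"
    unfolding binomial_expansion_uv sum_distrib_right by (simp add: mult_ac)
  then have "coeff (coeff ((1 + var_u) ^ L * (1 + var_u * var_v) ^ L * (1 - var_v)) N) M
      = (\<Sum>j | j \<le> M \<and> 2 * j \<le> N. int (L choose (N - 2 * j))
          * gbinom_diff (int (N - 2 * j)) (M - j) * gbinom (int (L - (N - 2 * j))) j)"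
    by (simp only:)
      (rule coeff_binomial_expansion[where D = "L + M + 1"]; (rule binomial_ring_times_one_minus binomial_ring_bounded)?; simp)
  also have "\<dots> = Ztilde L N M"
    unfolding Ztilde_eq_sum
  proof (intro sum.cong refl)
    fix j
    assume "j \<in> {j. j \<le> M \<and> 2 * j \<le> N}"
    then show "int (L choose (N - 2 * j)) * gbinom_diff (int (N - 2 * j)) (M - j) * gbinom (int (L - (N - 2 * j))) j
        = gbinom (int L) (N - 2 * j) * gbinom (int L - int N + 2 * int j) j * gbinom_diff (int N - 2 * int j) (M - j)"
      by (cases "N - 2 * j \<le> L") (simp_all add: gbinom_of_nat of_nat_diff binomial_eq_0 algebra_simps)
  qed
  finally show ?thesis .
qed

theorem proposition3:
  fixes L :: nat
  assumes "L \<ge> 1"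
  shows "(\<forall>N M. coeff (coeff ((1 + var_u) ^ L * (1 + var_u * var_v) ^ L
                  * (1 - var_u ^ 2 * var_v) * (1 - var_v)) N) M = Z L N M)
       \<and> (\<forall>N M. coeff (coeff ((1 + var_u) ^ L * (1 + var_u * var_v) ^ L
                  * (1 - var_v)) N) M = Ztilde L N M)"
  \<comment> \<open>the identities hold for \<open>L = 0\<close> as well\<close>
  by (simp add: coeff_Z_generating_polynomial coeff_Ztilde_generating_polynomial)

end
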